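(* Let $n\geq 3$ be odd and let $G=\langle x,y,z : x^2, y^4, z^{4n}, xyz, y^2z^{2n}\rangle$. Then $G$ has order $8n$ (and, via the corresponding $(2,4,4n)$-action, acts on a closed orientable surface of genus $n$), but this action is not gpnf: not every element of $G$ is conjugate in $G$ to a power of $x$, of $y$ or of $z$.
   Context: A gpnf-action is a faithful action of a finite group by orientation-preserving homeomorphisms on a closed orientable surface in which every element has a fixed point. For an action given by a smooth epimorphism from a Fuchsian triangle group of signature $(2,4,4n)$ sending the canonical generators to $x,y,z$, an element has a fixed point iff it is conjugate to a power of $x$, $y$ or $z$. *)

theory Defs
  imports "HOL-Algebra.Algebra"
begin

text \<open>A letter is a pair (generator, inverted?); (a, False) stands for a and
(a, True) for its inverse.\<close>

fun red_cons :: "'g \<times> bool \<Rightarrow> ('g \<times> bool) list \<Rightarrow> ('g \<times> bool) list" where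
  "red_cons a [] = [a]"
| "red_cons a (b # w) =
     (if fst a = fst b \<and> snd a \<noteq> snd b then w else a # b # w)"

definition reduce :: "('g \<times> bool) list \<Rightarrow> ('g \<times> bool) list" where
  "reduce w = foldr red_cons w []"

definition inv_word :: "('g \<times> bool) list \<Rightarrow> ('g \<times> bool) list" where
  "inv_word w = rev (map (\<lambda>(a, b). (a, \<not> b)) w)"

definition free_grp :: "('g \<times> bool) list monoid" where
  "free_grp = \<lparr> carrier = {w. reduce w = w},
                monoid.mult = (\<lambda>u v. reduce (u @ v)),
                monoid.one = [] \<rparr>"

definition normal_closure :: "('a, 'b) monoid_scheme \<Rightarrow> 'a set \<Rightarrow> 'a set" where
  "normal_closure G R = \<Inter> {N. N \<lhd> G \<and> R \<subseteq> N}"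

definition presented_group ::
  "('g \<times> bool) list set \<Rightarrow> ('g \<times> bool) list set monoid" where
  "presented_group R = free_grp Mod normal_closure free_grp (reduce ` R)"

definition pres_gen :: "('g \<times> bool) list set \<Rightarrow> 'g \<Rightarrow> ('g \<times> bool) list set" where
  "pres_gen R a = normal_closure free_grp (reduce ` R) #>\<^bsub>free_grp\<^esub> [(a, False)]"

datatype gen = Gx | Gy | Gz

definition relators_4p7 :: "nat \<Rightarrow> (gen \<times> bool) list set" where
  "relators_4p7 n =
     { replicate 2 (Gx, False),
       replicate 4 (Gy, False),
       replicate (4 * n) (Gz, False),
       [(Gx, False), (Gy, False), (Gz, False)],
       replicate 2 (Gy, False) @ replicate (2 * n) (Gz, False) }"

definition G4p7 :: "nat \<Rightarrow> (gen \<times> bool) list set monoid" where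
  "G4p7 n = presented_group (relators_4p7 n)"

definition gen4p7 :: "nat \<Rightarrow> gen \<Rightarrow> (gen \<times> bool) list set" where
  "gen4p7 n a = pres_gen (relators_4p7 n) a"

end

theory Submission
  imports Defs
begin

text \<open>Using \<open>x = y z\<close>, the relations give \<open>z y = y z\<^bsup>2n-1\<^esup>\<close> and \<open>y\<^sup>2 = z\<^bsup>2n\<^esup>\<close>, so every
  element is one of the \<open>8n\<close> words \<open>y\<^sup>e z\<^sup>c\<close> with \<open>e < 2\<close>, \<open>c < 4n\<close>. These words are
  pairwise distinct because they act differently on \<open>\<int>/4n\<close> through the affine maps
  \<open>x: t \<mapsto> (2n-1) t + 2n\<close>, \<open>y: t \<mapsto> (2n-1) t + 1\<close>, \<open>z: t \<mapsto> t + 1\<close>, which satisfy the relations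
  because \<open>(2n-1)\<^sup>2 \<equiv> 1 (mod 4n)\<close>; this yields the order of the group and of its generators.
  For odd \<open>n\<close>, sending \<open>(x, y, z)\<close> to \<open>(2, 1, 1)\<close> in \<open>\<int>/4\<close> and to \<open>(1, 1, 0)\<close> in \<open>\<int>/2\<close>
  defines two characters. They map \<open>x y\<^sup>2\<close> to \<open>(0, 1)\<close>, whereas a conjugate of \<open>x\<^sup>k\<close>, \<open>y\<^sup>k\<close>
  or \<open>z\<^sup>k\<close> goes to \<open>(2k, k)\<close>, \<open>(k, k)\<close> or \<open>(k, 0)\<close>, never to \<open>(0, 1)\<close>.\<close>

section \<open>Reduced words and the free group\<close>

fun reduced :: "('g \<times> bool) list \<Rightarrow> bool" where
  "reduced [] = True"
| "reduced [a] = True"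
| "reduced (a # b # w) = (\<not> (fst a = fst b \<and> snd a \<noteq> snd b) \<and> reduced (b # w))"

lemma reduced_ConsD: "reduced (a # w) \<Longrightarrow> reduced w"
  by (cases w) auto

lemma reduced_red_cons: "reduced w \<Longrightarrow> reduced (red_cons a w)"
  by (cases w) (auto dest: reduced_ConsD)

lemma red_cons_reduced: "reduced (a # w) \<Longrightarrow> red_cons a w = a # w"
  by (cases w) auto

lemma reduced_foldr_red_cons: "reduced r \<Longrightarrow> reduced (foldr red_cons u r)"
  by (induction u) (auto intro: reduced_red_cons)

lemma reduced_reduce: "reduced (reduce w)"
  unfolding reduce_def by (rule reduced_foldr_red_cons) simp

lemma reduce_Cons: "reduce (a # w) = red_cons a (reduce w)"
  by (simp add: reduce_def)

lemma reduce_append: "reduce (u @ v) = foldr red_cons u (reduce v)"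
  by (simp add: reduce_def)

lemma reduce_reduced: "reduced w \<Longrightarrow> reduce w = w"
proof (induction w)
  case Nil
  then show ?case by (simp add: reduce_def)
next
  case (Cons a w)
  then show ?case by (simp add: reduce_Cons red_cons_reduced reduced_ConsD)
qed

lemma carrier_free_grp: "carrier free_grp = {w. reduced w}"
  by (auto simp: free_grp_def reduce_reduced) (metis reduced_reduce)

lemma mult_free_grp: "u \<otimes>\<^bsub>free_grp\<^esub> v = reduce (u @ v)"
  by (simp add: free_grp_def)

lemma one_free_grp: "\<one>\<^bsub>free_grp\<^esub> = []"
  by (simp add: free_grp_def)

lemma red_cons_inverse_cancel:
  assumes "reduced w"
  shows "red_cons (fst a, \<not> snd a) (red_cons a w) = w"
proof (cases w)
  case Nil
  then show ?thesis by (cases a) auto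
next
  case (Cons b w')
  show ?thesis
  proof (cases "fst a = fst b \<and> snd a \<noteq> snd b")
    case True
    then have "(fst a, \<not> snd a) = b" by (cases a; cases b) auto
    with Cons True assms show ?thesis by (simp add: red_cons_reduced)
  next
    case False
    with Cons show ?thesis by (cases a; cases b) auto
  qed
qed

lemma foldr_red_cons_red_cons:
  assumes "reduced t" "reduced r"
  shows "foldr red_cons (red_cons a t) r = red_cons a (foldr red_cons t r)"
proof (cases t)
  case Nil
  then show ?thesis by simp
next
  case (Cons b t')
  show ?thesis
  proof (cases "fst a = fst b \<and> snd a \<noteq> snd b")
    case True
    then have "a = (fst b, \<not> snd b)" by (cases a; cases b) auto
    with Cons True show ?thesis
      using red_cons_inverse_cancel[OF reduced_foldr_red_cons[OF assms(2)], of b t'] by simp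
  next
    case False
    with Cons show ?thesis by auto
  qed
qed

lemma foldr_red_cons_reduce: "reduced r \<Longrightarrow> foldr red_cons (reduce u) r = foldr red_cons u r"
  by (induction u) (simp_all add: reduce_def foldr_red_cons_red_cons reduced_foldr_red_cons)

lemma reduce_append_reduce_left: "reduce (reduce u @ v) = reduce (u @ v)"
  by (simp add: reduce_append foldr_red_cons_reduce reduced_reduce)

lemma reduce_append_reduce_right: "reduce (u @ reduce v) = reduce (u @ v)"
  by (simp add: reduce_append reduce_reduced reduced_reduce)

lemma foldr_red_cons_inv_word:
  "reduced r \<Longrightarrow> foldr red_cons (inv_word w) (foldr red_cons w r) = r"
proof (induction w arbitrary: r)
  case Nil
  then show ?case by (simp add: inv_word_def)
next
  case (Cons a w)
  have "inv_word (a # w) = inv_word w @ [(fst a, \<not> snd a)]"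
    by (cases a) (simp add: inv_word_def)
  with Cons show ?case
    by (simp add: red_cons_inverse_cancel reduced_foldr_red_cons)
qed

lemma group_free_grp: "group free_grp"
proof (rule groupI)
  fix u assume "u \<in> carrier free_grp"
  then have "reduce (inv_word u @ u) = []"
    using foldr_red_cons_inv_word[of "[]" u] reduce_reduced[of u]
    by (simp add: carrier_free_grp reduce_def)
  then show "\<exists>v\<in>carrier free_grp. v \<otimes>\<^bsub>free_grp\<^esub> u = \<one>\<^bsub>free_grp\<^esub>"
    by (intro bexI[of _ "reduce (inv_word u)"])
      (simp_all add: carrier_free_grp mult_free_grp one_free_grp reduce_append_reduce_left
        reduced_reduce)
qed (simp_all add: carrier_free_grp mult_free_grp one_free_grp reduced_reduce reduce_reduced
       reduce_append_reduce_left reduce_append_reduce_right)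

section \<open>Evaluating words in a group\<close>

definition eval_letter :: "('a, 'b) monoid_scheme \<Rightarrow> ('g \<Rightarrow> 'a) \<Rightarrow> 'g \<times> bool \<Rightarrow> 'a" where
  "eval_letter H f l = (if snd l then inv\<^bsub>H\<^esub> f (fst l) else f (fst l))"

primrec eval_word :: "('a, 'b) monoid_scheme \<Rightarrow> ('g \<Rightarrow> 'a) \<Rightarrow> ('g \<times> bool) list \<Rightarrow> 'a" where
  "eval_word H f [] = \<one>\<^bsub>H\<^esub>"
| "eval_word H f (l # w) = eval_letter H f l \<otimes>\<^bsub>H\<^esub> eval_word H f w"

context group
begin

lemma eval_letter_closed: "(\<And>a. f a \<in> carrier G) \<Longrightarrow> eval_letter G f l \<in> carrier G"
  by (simp add: eval_letter_def)

lemma eval_word_closed: "(\<And>a. f a \<in> carrier G) \<Longrightarrow> eval_word G f w \<in> carrier G"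
  by (induction w) (simp_all add: eval_letter_closed)

lemma eval_word_append:
  "(\<And>a. f a \<in> carrier G) \<Longrightarrow> eval_word G f (u @ v) = eval_word G f u \<otimes> eval_word G f v"
  by (induction u) (simp_all add: m_assoc eval_letter_closed eval_word_closed)

lemma eval_word_replicate:
  "(\<And>a. f a \<in> carrier G) \<Longrightarrow> eval_word G f (replicate k (a, False)) = f a [^] k"
  by (induction k) (simp_all add: eval_letter_def, metis nat_pow_Suc nat_pow_Suc2)

lemma eval_word_red_cons:
  assumes "\<And>a. f a \<in> carrier G"
  shows "eval_word G f (red_cons l w) = eval_word G f (l # w)"
proof (cases w)
  case (Cons b w')
  show ?thesis
  proof (cases "fst l = fst b \<and> snd l \<noteq> snd b")
    case True
    then have "eval_letter G f l \<otimes> eval_letter G f b = \<one>"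
      using assms by (cases l; cases b) (auto simp: eval_letter_def)
    with Cons True assms show ?thesis
      by (simp flip: m_assoc add: eval_letter_closed eval_word_closed)
  qed (use Cons in auto)
qed simp

lemma eval_word_reduce: "(\<And>a. f a \<in> carrier G) \<Longrightarrow> eval_word G f (reduce w) = eval_word G f w"
  by (induction w) (simp_all add: reduce_Cons eval_word_red_cons, simp add: reduce_def)

lemma eval_word_hom: "(\<And>a. f a \<in> carrier G) \<Longrightarrow> eval_word G f \<in> hom free_grp G"
  by (auto simp: hom_def mult_free_grp eval_word_reduce eval_word_append eval_word_closed)

end

section \<open>Presented groups\<close>

lemma normal_closure_subset: "R \<subseteq> normal_closure G R"
  by (auto simp: normal_closure_def)

lemma normal_closure_least: "N \<lhd> G \<Longrightarrow> R \<subseteq> N \<Longrightarrow> normal_closure G R \<subseteq> N"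
  by (auto simp: normal_closure_def)

lemma normal_closure_normal:
  fixes G (structure)
  assumes "group G" "R \<subseteq> carrier G"
  shows "normal_closure G R \<lhd> G"
proof -
  interpret group G by fact
  let ?A = "{N. N \<lhd> G \<and> R \<subseteq> N}"
  have "carrier G \<in> ?A" using normal_self assms(2) by blast
  then have "subgroup (\<Inter>?A) G"
    by (intro subgroups_Inter) (auto dest: normal_imp_subgroup)
  moreover have "x \<otimes> h \<otimes> inv x \<in> \<Inter>?A" if "x \<in> carrier G" "h \<in> \<Inter>?A" for x h
  proof
    fix N assume "N \<in> ?A"
    with that show "x \<otimes> h \<otimes> inv x \<in> N" by (auto simp: normal.inv_op_closed2)
  qed
  ultimately show ?thesis
    unfolding normal_closure_def by (simp add: normal_inv_iff)
qed

abbreviation relator_closure :: "('g \<times> bool) list set \<Rightarrow> ('g \<times> bool) list set" where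
  "relator_closure R \<equiv> normal_closure free_grp (reduce ` R)"

lemma relator_closure_normal: "relator_closure R \<lhd> free_grp"
  by (rule normal_closure_normal[OF group_free_grp]) (auto simp: carrier_free_grp reduced_reduce)

lemma group_presented_group: "group (presented_group R)"
  unfolding presented_group_def by (rule normal.factorgroup_is_group[OF relator_closure_normal])

lemma carrier_presented_group:
  "carrier (presented_group R) = (\<lambda>w. relator_closure R #>\<^bsub>free_grp\<^esub> w) ` carrier free_grp"
  unfolding presented_group_def FactGroup_def RCOSETS_def by auto

lemma pres_gen_closed: "pres_gen R a \<in> carrier (presented_group R)"
  unfolding carrier_presented_group pres_gen_def by (rule imageI) (simp add: carrier_free_grp)

lemma coset_hom: "(\<lambda>w. relator_closure R #>\<^bsub>free_grp\<^esub> w) \<in> hom free_grp (presented_group R)"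
  unfolding presented_group_def by (rule normal.r_coset_hom_Mod[OF relator_closure_normal])

lemma coset_eq_eval_word:
  assumes "reduced w"
  shows "relator_closure R #>\<^bsub>free_grp\<^esub> w = eval_word (presented_group R) (pres_gen R) w"
  using assms
proof (induction w)
  case Nil
  have "relator_closure R #>\<^bsub>free_grp\<^esub> \<one>\<^bsub>free_grp\<^esub> = relator_closure R"
    using relator_closure_normal group_free_grp
    by (intro subgroup.rcos_const) (auto dest: normal_imp_subgroup subgroup.one_closed)
  then show ?case by (simp add: one_free_grp presented_group_def)
next
  case (Cons l w)
  interpret F: group "free_grp :: ('g \<times> bool) list monoid" by (rule group_free_grp)
  interpret h: group_hom free_grp "presented_group R" "\<lambda>w. relator_closure R #>\<^bsub>free_grp\<^esub> w"
    by (simp add: group_hom_def group_hom_axioms_def F.group_axioms group_presented_group coset_hom)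
  have w: "reduced w" using Cons.prems by (rule reduced_ConsD)
  have carr: "[l] \<in> carrier free_grp" "w \<in> carrier free_grp" "[(fst l, False)] \<in> carrier free_grp"
    using w by (auto simp: carrier_free_grp)
  have "l # w = [l] \<otimes>\<^bsub>free_grp\<^esub> w"
    using Cons.prems w by (simp add: mult_free_grp reduce_Cons reduce_reduced red_cons_reduced)
  then have split: "relator_closure R #>\<^bsub>free_grp\<^esub> (l # w)
      = (relator_closure R #>\<^bsub>free_grp\<^esub> [l]) \<otimes>\<^bsub>presented_group R\<^esub> (relator_closure R #>\<^bsub>free_grp\<^esub> w)"
    using carr by (simp only: h.hom_mult)
  have "relator_closure R #>\<^bsub>free_grp\<^esub> [l] = eval_letter (presented_group R) (pres_gen R) l"
  proof (cases l)
    case (Pair a b)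
    show ?thesis
    proof (cases b)
      case True
      have "[(a, True)] \<otimes>\<^bsub>free_grp\<^esub> [(a, False)] = \<one>\<^bsub>free_grp\<^esub>"
        by (simp add: mult_free_grp one_free_grp reduce_def)
      then have "inv\<^bsub>free_grp\<^esub> [(a, False)] = [(a, True)]"
        by (intro F.inv_equality) (simp_all add: carrier_free_grp)
      then have "relator_closure R #>\<^bsub>free_grp\<^esub> [(a, True)]
          = inv\<^bsub>presented_group R\<^esub> (relator_closure R #>\<^bsub>free_grp\<^esub> [(a, False)])"
        using h.hom_inv[of "[(a, False)]"] by (simp add: carrier_free_grp)
      with Pair True show ?thesis by (simp add: eval_letter_def pres_gen_def)
    qed (simp add: Pair eval_letter_def pres_gen_def)
  qed
  with split Cons.IH[OF w] show ?case by simp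
qed

lemma carrier_presented_group_eval:
  "carrier (presented_group R) = range (eval_word (presented_group R) (pres_gen R))"
proof
  show "carrier (presented_group R) \<subseteq> range (eval_word (presented_group R) (pres_gen R))"
  proof
    fix C assume "C \<in> carrier (presented_group R)"
    then obtain w where "reduced w" "C = relator_closure R #>\<^bsub>free_grp\<^esub> w"
      by (auto simp: carrier_presented_group carrier_free_grp)
    then show "C \<in> range (eval_word (presented_group R) (pres_gen R))"
      by (simp add: coset_eq_eval_word)
  qed
  show "range (eval_word (presented_group R) (pres_gen R)) \<subseteq> carrier (presented_group R)"
    using group.eval_word_closed[OF group_presented_group, where f = "pres_gen R"]
    by (auto simp: pres_gen_closed)
qed

lemma eval_word_relator:
  assumes "r \<in> R"
  shows "eval_word (presented_group R) (pres_gen R) r = \<one>\<^bsub>presented_group R\<^esub>"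
proof -
  interpret Q: group "presented_group R" by (rule group_presented_group)
  have "eval_word (presented_group R) (pres_gen R) r
      = eval_word (presented_group R) (pres_gen R) (reduce r)"
    by (simp add: Q.eval_word_reduce pres_gen_closed)
  also have "\<dots> = relator_closure R #>\<^bsub>free_grp\<^esub> reduce r"
    by (simp add: coset_eq_eval_word reduced_reduce)
  also have "\<dots> = relator_closure R"
    using assms normal_closure_subset[of "reduce ` R" free_grp]
    by (intro subgroup.rcos_const[OF normal_imp_subgroup[OF relator_closure_normal] group_free_grp])
      auto
  finally show ?thesis by (simp add: presented_group_def)
qed

definition presented_lift :: "('a, 'b) monoid_scheme \<Rightarrow> ('g \<Rightarrow> 'a) \<Rightarrow> ('g \<times> bool) list set \<Rightarrow> 'a" where
  "presented_lift H f C = the_elem (eval_word H f ` C)"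

locale satisfies_relators = group H for H (structure) +
  fixes R :: "('g \<times> bool) list set" and f :: "'g \<Rightarrow> 'a"
  assumes images_closed [simp]: "f a \<in> carrier H"
    and relators_eq_one: "r \<in> R \<Longrightarrow> eval_word H f r = \<one>"
begin

lemma eval_word_hom_free_grp: "eval_word H f \<in> hom free_grp H"
  by (rule eval_word_hom) simp

lemma presented_lift_coset:
  assumes w: "w \<in> carrier free_grp"
  shows "presented_lift H f (relator_closure R #>\<^bsub>free_grp\<^esub> w) = eval_word H f w"
proof -
  interpret h: group_hom free_grp H "eval_word H f"
    unfolding group_hom_def group_hom_axioms_def
    using group_free_grp group_axioms eval_word_hom_free_grp by blast
  have "reduce ` R \<subseteq> kernel free_grp H (eval_word H f)"
    by (auto simp: kernel_def carrier_free_grp reduced_reduce eval_word_reduce relators_eq_one)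
  then have N_kernel: "relator_closure R \<subseteq> kernel free_grp H (eval_word H f)"
    by (rule normal_closure_least[OF h.normal_kernel])
  have "eval_word H f y = eval_word H f w" if y: "y \<in> relator_closure R #>\<^bsub>free_grp\<^esub> w" for y
  proof -
    obtain k where k: "k \<in> relator_closure R" "y = k \<otimes>\<^bsub>free_grp\<^esub> w"
      using y unfolding r_coset_def by blast
    then have "k \<in> carrier free_grp" "eval_word H f k = \<one>"
      using N_kernel by (auto simp: kernel_def)
    with k w show ?thesis by (simp add: eval_word_closed)
  qed
  moreover have "w \<in> relator_closure R #>\<^bsub>free_grp\<^esub> w"
    by (rule group.rcos_self[OF group_free_grp w normal_imp_subgroup[OF relator_closure_normal]])
  ultimately show ?thesis
    unfolding presented_lift_def by (intro the_elem_image_unique) blast+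
qed

lemma presented_lift_hom: "group_hom (presented_group R) H (presented_lift H f)"
proof -
  have "presented_lift H f C \<in> carrier H \<and>
      presented_lift H f (C \<otimes>\<^bsub>presented_group R\<^esub> D) = presented_lift H f C \<otimes> presented_lift H f D"
    if CD: "C \<in> carrier (presented_group R)" "D \<in> carrier (presented_group R)" for C D
  proof -
    obtain u v where uv: "u \<in> carrier free_grp" "v \<in> carrier free_grp"
      "C = relator_closure R #>\<^bsub>free_grp\<^esub> u" "D = relator_closure R #>\<^bsub>free_grp\<^esub> v"
      using CD unfolding carrier_presented_group by blast
    then have "C \<otimes>\<^bsub>presented_group R\<^esub> D = relator_closure R #>\<^bsub>free_grp\<^esub> (u \<otimes>\<^bsub>free_grp\<^esub> v)"
      by (simp add: presented_group_def FactGroup_def normal.rcos_sum[OF relator_closure_normal])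
    with uv show ?thesis
      by (simp add: presented_lift_coset group.subgroup_self[OF group_free_grp] subgroup.m_closed
          eval_word_closed hom_mult[OF eval_word_hom_free_grp])
  qed
  then show ?thesis
    by (auto simp: group_hom_def group_hom_axioms_def hom_def group_axioms group_presented_group)
qed

lemma presented_lift_pres_gen: "presented_lift H f (pres_gen R a) = f a"
proof -
  have "[(a, False)] \<in> carrier free_grp"
    by (simp add: carrier_free_grp)
  then show ?thesis
    by (simp add: pres_gen_def presented_lift_coset eval_letter_def)
qed

end

context group
begin

lemma ord_eq_two_power:
  assumes "x \<in> carrier G" "x [^] ((2::nat) ^ Suc k) = \<one>" "x [^] ((2::nat) ^ k) \<noteq> \<one>"
  shows "ord x = 2 ^ Suc k"
proof -
  obtain i where i: "i \<le> Suc k" "ord x = 2 ^ i"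
    using assms(1,2) pow_eq_id divides_primepow_nat[OF two_is_prime_nat] by blast
  have "\<not> i \<le> k"
  proof
    assume "i \<le> k"
    then have "ord x dvd 2 ^ k" using i by (simp add: le_imp_power_dvd)
    with assms(1,3) show False by (simp add: pow_eq_id)
  qed
  with i show ?thesis by (simp add: le_Suc_eq)
qed

lemma pow_mod_eq:
  assumes "x \<in> carrier G" "x [^] m = \<one>"
  shows "x [^] (k::nat) = x [^] (k mod m)"
proof -
  have "x [^] k = (x [^] m) [^] (k div m) \<otimes> x [^] (k mod m)"
    using assms(1) by (simp add: nat_pow_pow nat_pow_mult)
  with assms show ?thesis by simp
qed

lemma inv_mult_closed_finite:
  assumes "finite S" "S \<subseteq> carrier G" "g \<in> carrier G"
    and closed: "\<And>s. s \<in> S \<Longrightarrow> g \<otimes> s \<in> S" and "s \<in> S"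
  shows "inv g \<otimes> s \<in> S"
proof -
  have "inj_on (\<lambda>t. g \<otimes> t) S"
    using assms(2,3) by (intro inj_onI) (simp add: subsetD)
  then have "(\<lambda>t. g \<otimes> t) ` S = S"
    using assms(1) closed by (intro endo_inj_surj) auto
  then obtain t where "t \<in> S" "s = g \<otimes> t"
    using assms(5) by blast
  with assms(2,3) show ?thesis
    by (auto simp: m_assoc[symmetric])
qed

end

lemma (in group_hom) hom_conj_int_pow_comm:
  assumes "comm_group H" "g \<in> carrier G" "s \<in> carrier G"
  shows "h (g \<otimes> s [^] (k::int) \<otimes> inv g) = h s [^]\<^bsub>H\<^esub> k"
proof -
  interpret H: comm_group H by fact
  have "h (g \<otimes> s [^] k \<otimes> inv g) = h g \<otimes>\<^bsub>H\<^esub> h s [^]\<^bsub>H\<^esub> k \<otimes>\<^bsub>H\<^esub> inv\<^bsub>H\<^esub> h g"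
    using assms(2,3) by (simp add: hom_int_pow)
  also have "\<dots> = h s [^]\<^bsub>H\<^esub> k \<otimes>\<^bsub>H\<^esub> (h g \<otimes>\<^bsub>H\<^esub> inv\<^bsub>H\<^esub> h g)"
    using assms(2,3) by (simp add: H.m_comm[of "h g"] H.m_assoc)
  finally show ?thesis
    using assms(2,3) by simp
qed

locale relations_4p7 = group G for G (structure) +
  fixes x y z :: 'a and n :: nat
  assumes generators_closed [simp]: "x \<in> carrier G" "y \<in> carrier G" "z \<in> carrier G"
    and n_pos: "n > 0"
    and x_pow: "x [^] (2::nat) = \<one>"
    and y_pow: "y [^] (4::nat) = \<one>"
    and z_pow: "z [^] (4 * n) = \<one>"
    and xyz: "x \<otimes> y \<otimes> z = \<one>"
    and y_pow_z_pow: "y [^] (2::nat) \<otimes> z [^] (2 * n) = \<one>"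

lemma (in group) relations_4p7_iff_relators:
  assumes "\<And>a. f a \<in> carrier G" "n > 0"
  shows "relations_4p7 G (f Gx) (f Gy) (f Gz) n \<longleftrightarrow> (\<forall>r \<in> relators_4p7 n. eval_word G f r = \<one>)"
  using assms
  by (simp add: relations_4p7_def relations_4p7_axioms_def relators_4p7_def group_axioms
      eval_word_append eval_word_replicate eval_letter_def m_assoc)

context relations_4p7
begin

lemma x_eq: "x = y \<otimes> z"
proof -
  have "x \<otimes> x = x \<otimes> (y \<otimes> z)"
    using x_pow xyz by (simp add: numeral_2_eq_2 m_assoc)
  then show ?thesis by simp
qed

lemma y_pow_two: "y [^] (2::nat) = z [^] (2 * n)"
proof -
  have "z [^] (2 * n) \<otimes> z [^] (2 * n) = z [^] (4 * n)"
    by (simp add: nat_pow_mult)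
  with y_pow_z_pow z_pow have "y [^] (2::nat) \<otimes> z [^] (2 * n) = z [^] (2 * n) \<otimes> z [^] (2 * n)"
    by simp
  then show ?thesis by simp
qed

lemma z_mult_y: "z \<otimes> y = y \<otimes> z [^] (2 * n - 1)"
proof -
  obtain m where m: "2 * n = Suc m"
    using n_pos by (metis Suc_pred nat_0_less_mult_iff zero_less_numeral)
  have "y \<otimes> (z \<otimes> y \<otimes> z) = x \<otimes> x"
    by (simp add: x_eq m_assoc)
  also have "\<dots> = y [^] (2::nat) \<otimes> z [^] (2 * n)"
    using x_pow y_pow_z_pow by (simp add: numeral_2_eq_2)
  also have "\<dots> = y \<otimes> (y \<otimes> z [^] m \<otimes> z)"
    unfolding m by (simp add: numeral_2_eq_2 m_assoc)
  finally have "z \<otimes> y \<otimes> z = y \<otimes> z [^] m \<otimes> z"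
    by simp
  moreover have "2 * n - 1 = m"
    using m by simp
  ultimately show ?thesis by simp
qed

definition normal_forms :: "'a set" where
  "normal_forms = (\<lambda>(e, a). y [^] e \<otimes> z [^] a) ` ({..<2::nat} \<times> {..<4 * n})"

lemma normal_forms_subset_carrier: "normal_forms \<subseteq> carrier G"
  by (auto simp: normal_forms_def)

lemma finite_normal_forms: "finite normal_forms"
  by (simp add: normal_forms_def)

lemma normal_form_mem:
  fixes e a :: nat
  assumes "e < 2"
  shows "y [^] e \<otimes> z [^] a \<in> normal_forms"
proof -
  have "z [^] a = z [^] (a mod (4 * n))"
    by (rule pow_mod_eq) (simp_all add: z_pow)
  moreover have "a mod (4 * n) < 4 * n"
    using n_pos by simp
  ultimately show ?thesis
    using assms unfolding normal_forms_def by force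
qed

lemma y_mult_normal_forms:
  assumes "s \<in> normal_forms"
  shows "y \<otimes> s \<in> normal_forms"
proof -
  obtain e a :: nat where s: "s = y [^] e \<otimes> z [^] a" "e < 2"
    using assms by (auto simp: normal_forms_def)
  show ?thesis
  proof (cases "e = 0")
    case True
    with s show ?thesis using normal_form_mem[of 1 a] by simp
  next
    case False
    with s have "e = 1" by simp
    with s have "y \<otimes> s = y [^] (2::nat) \<otimes> z [^] a"
      by (simp add: numeral_2_eq_2 m_assoc)
    also have "\<dots> = z [^] (2 * n + a)"
      by (simp add: y_pow_two nat_pow_mult)
    finally show ?thesis
      using normal_form_mem[of 0 "2 * n + a"] by simp
  qed
qed

lemma z_mult_normal_forms:
  assumes "s \<in> normal_forms"
  shows "z \<otimes> s \<in> normal_forms"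
proof -
  obtain e a :: nat where s: "s = y [^] e \<otimes> z [^] a" "e < 2"
    using assms by (auto simp: normal_forms_def)
  show ?thesis
  proof (cases "e = 0")
    case True
    with s show ?thesis
      using normal_form_mem[of 0 "1 + a"] nat_pow_mult[of z 1 a] by simp
  next
    case False
    with s have "e = 1" by simp
    with s have "z \<otimes> s = z \<otimes> y \<otimes> z [^] a"
      by (simp add: m_assoc)
    also have "\<dots> = y [^] (1::nat) \<otimes> z [^] (2 * n - 1 + a)"
      by (simp add: z_mult_y m_assoc nat_pow_mult)
    finally show ?thesis
      using normal_form_mem[of 1 "2 * n - 1 + a"] by simp
  qed
qed

lemma x_mult_normal_forms: "s \<in> normal_forms \<Longrightarrow> x \<otimes> s \<in> normal_forms"
  using normal_forms_subset_carrier
  by (auto simp: x_eq m_assoc y_mult_normal_forms z_mult_normal_forms)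

lemma eval_word_in_normal_forms:
  assumes "f Gx = x" "f Gy = y" "f Gz = z"
  shows "eval_word G f w \<in> normal_forms"
proof (induction w)
  case Nil
  then show ?case using normal_form_mem[of 0 0] by simp
next
  case (Cons l w)
  have f: "f c \<in> carrier G" for c
    using assms by (cases c) simp_all
  have gen: "f c \<otimes> s \<in> normal_forms" if "s \<in> normal_forms" for c s
    using that assms
    by (cases c) (simp_all add: x_mult_normal_forms y_mult_normal_forms z_mult_normal_forms)
  have "inv (f c) \<otimes> s \<in> normal_forms" if "s \<in> normal_forms" for c s
    using finite_normal_forms normal_forms_subset_carrier f gen that
    by (rule inv_mult_closed_finite)
  with gen Cons.IH show ?case
    by (simp add: eval_letter_def)
qed

end

section \<open>Affine maps of the integers modulo m\<close>

definition aff_map :: "int \<Rightarrow> int \<Rightarrow> int \<Rightarrow> int \<Rightarrow> int" where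
  "aff_map m u v = (\<lambda>t \<in> {0..<m}. (u * t + v) mod m)"

lemma aff_map_eq_iff:
  assumes "m > 1"
  shows "aff_map m u v = aff_map m u' v' \<longleftrightarrow> u mod m = u' mod m \<and> v mod m = v' mod m"
proof
  assume eq: "aff_map m u v = aff_map m u' v'"
  have "aff_map m u v 0 = aff_map m u' v' 0" "aff_map m u v 1 = aff_map m u' v' 1"
    using eq by simp_all
  then have "v mod m = v' mod m" "(u + v) mod m = (u' + v') mod m"
    using assms by (simp_all add: aff_map_def)
  then show "u mod m = u' mod m \<and> v mod m = v' mod m"
    by (metis add_diff_cancel_right' mod_diff_cong)
next
  assume "u mod m = u' mod m \<and> v mod m = v' mod m"
  then have "(u * t + v) mod m = (u' * t + v') mod m" for t
    by (intro mod_add_cong mod_mult_cong) simp_all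
  then show "aff_map m u v = aff_map m u' v'"
    by (simp add: aff_map_def)
qed

lemma aff_map_Bij:
  assumes "m > 0" "coprime u m"
  shows "aff_map m u v \<in> Bij {0..<m}"
proof -
  have "inj_on (aff_map m u v) {0..<m}"
  proof (rule inj_onI)
    fix t t' assume t: "t \<in> {0..<m}" "t' \<in> {0..<m}" and "aff_map m u v t = aff_map m u v t'"
    then have "(u * t + v) mod m = (u * t' + v) mod m"
      by (simp add: aff_map_def)
    then have "m dvd u * (t - t')"
      by (simp add: mod_eq_dvd_iff algebra_simps)
    with assms(2) have "m dvd t - t'"
      by (simp add: coprime_dvd_mult_right_iff coprime_commute)
    with t show "t = t'"
      by (metis atLeastLessThan_iff mod_eq_dvd_iff mod_pos_pos_trivial)
  qed
  moreover have "aff_map m u v ` {0..<m} \<subseteq> {0..<m}"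
    using assms(1) by (auto simp: aff_map_def)
  ultimately have "bij_betw (aff_map m u v) {0..<m} {0..<m}"
    by (simp add: bij_betw_def endo_inj_surj)
  then show ?thesis
    by (simp add: Bij_def aff_map_def)
qed

lemma aff_map_mult:
  assumes "m > 0" "coprime u m" "coprime u' m"
  shows "aff_map m u v \<otimes>\<^bsub>BijGroup {0..<m}\<^esub> aff_map m u' v' = aff_map m (u * u') (u * v' + v)"
proof -
  have "(u * ((u' * t + v') mod m) + v) mod m = (u * u' * t + (u * v' + v)) mod m" for t
  proof -
    have "(u * ((u' * t + v') mod m) + v) mod m = (u * (u' * t + v') + v) mod m"
      by (metis mod_add_left_eq mod_mult_right_eq)
    then show ?thesis by (simp add: algebra_simps)
  qed
  moreover have "(u' * t + v') mod m \<in> {0..<m}" for t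
    using assms(1) by simp
  ultimately show ?thesis
    using assms aff_map_Bij by (auto simp: BijGroup_def compose_def aff_map_def fun_eq_iff)
qed

lemma aff_map_one: "m > 0 \<Longrightarrow> \<one>\<^bsub>BijGroup {0..<m}\<^esub> = aff_map m 1 0"
  by (auto simp: BijGroup_def aff_map_def fun_eq_iff)

lemma aff_map_translation_pow:
  assumes "m > 0"
  shows "aff_map m 1 v [^]\<^bsub>BijGroup {0..<m}\<^esub> (k::nat) = aff_map m 1 (int k * v)"
  by (induction k) (simp_all add: assms aff_map_one aff_map_mult algebra_simps)

definition aff_rep :: "nat \<Rightarrow> gen \<Rightarrow> int \<Rightarrow> int" where
  "aff_rep n a = (case a of
      Gx \<Rightarrow> aff_map (4 * int n) (2 * int n - 1) (2 * int n)
    | Gy \<Rightarrow> aff_map (4 * int n) (2 * int n - 1) 1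
    | Gz \<Rightarrow> aff_map (4 * int n) 1 1)"

context
  fixes n :: nat
  assumes n_pos: "n > 0"
begin

lemma aff_rep_slope_coprime: "coprime (2 * int n - 1) (4 * int n)"
proof -
  have "coprime (2 * int n - 1) (2 * int n)"
    by (rule coprime_diff_one_left)
  moreover have "coprime (2 * int n - 1) 2"
    by simp
  moreover have "4 * int n = 2 * (2 * int n)"
    by simp
  ultimately show ?thesis
    by (simp only: coprime_mult_right_iff)
qed

lemma aff_rep_slope_square_mod: "(2 * int n - 1) * (2 * int n - 1) mod (4 * int n) = 1"
proof -
  have "(2 * int n - 1) * (2 * int n - 1) = 1 + (int n - 1) * (4 * int n)"
    by (simp add: algebra_simps)
  then show ?thesis
    using n_pos by simp
qed

lemma aff_rep_closed: "aff_rep n a \<in> carrier (BijGroup {0..<4 * int n})"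
  using n_pos aff_rep_slope_coprime by (cases a) (simp_all add: aff_rep_def BijGroup_def aff_map_Bij)

lemma aff_map_eq_one:
  assumes "u mod (4 * int n) = 1" "v mod (4 * int n) = 0"
  shows "aff_map (4 * int n) u v = \<one>\<^bsub>BijGroup {0..<4 * int n}\<^esub>"
  using assms n_pos by (simp add: aff_map_one aff_map_eq_iff)

lemma relations_4p7_aff_rep:
  "relations_4p7 (BijGroup {0..<4 * int n}) (aff_rep n Gx) (aff_rep n Gy) (aff_rep n Gz) n"
proof -
  interpret B: group "BijGroup {0..<4 * int n}" by (rule group_BijGroup)
  have m: "4 * int n > 0" using n_pos by simp
  have one_mod: "1 mod (4 * int n) = 1" using n_pos by simp
  note mult = aff_map_mult[OF m] aff_rep_slope_coprime
  have y_sq: "aff_rep n Gy [^]\<^bsub>BijGroup {0..<4 * int n}\<^esub> (2::nat) = aff_map (4 * int n) 1 (2 * int n)"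
    using n_pos aff_rep_slope_square_mod
    by (simp add: numeral_2_eq_2 aff_rep_def mult aff_map_one[OF m] aff_map_eq_iff
        del: coprime_mult_right_iff)
  have z_pow: "aff_rep n Gz [^]\<^bsub>BijGroup {0..<4 * int n}\<^esub> k = aff_map (4 * int n) 1 (int k)" for k
    by (simp add: aff_rep_def aff_map_translation_pow m)
  show ?thesis
  proof (unfold_locales)
    show "aff_rep n Gx \<in> carrier (BijGroup {0..<4 * int n})"
      "aff_rep n Gy \<in> carrier (BijGroup {0..<4 * int n})"
      "aff_rep n Gz \<in> carrier (BijGroup {0..<4 * int n})"
      by (rule aff_rep_closed)+
    show "n > 0" by (rule n_pos)
    have "aff_rep n Gx [^]\<^bsub>BijGroup {0..<4 * int n}\<^esub> (2::nat)
        = aff_map (4 * int n) ((2 * int n - 1) * (2 * int n - 1)) ((2 * int n - 1) * (2 * int n) + 2 * int n)"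
      by (simp add: numeral_2_eq_2 aff_rep_def mult aff_map_one[OF m] del: coprime_mult_right_iff)
    also have "\<dots> = \<one>\<^bsub>BijGroup {0..<4 * int n}\<^esub>"
    proof (rule aff_map_eq_one)
      have "(2 * int n - 1) * (2 * int n) + 2 * int n = int n * (4 * int n)"
        by (simp add: algebra_simps)
      then show "((2 * int n - 1) * (2 * int n) + 2 * int n) mod (4 * int n) = 0"
        by simp
    qed (rule aff_rep_slope_square_mod)
    finally show "aff_rep n Gx [^]\<^bsub>BijGroup {0..<4 * int n}\<^esub> (2::nat) = \<one>\<^bsub>BijGroup {0..<4 * int n}\<^esub>" .
    have "aff_rep n Gy [^]\<^bsub>BijGroup {0..<4 * int n}\<^esub> (4::nat)
        = (aff_rep n Gy [^]\<^bsub>BijGroup {0..<4 * int n}\<^esub> (2::nat)) [^]\<^bsub>BijGroup {0..<4 * int n}\<^esub> (2::nat)"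
      using aff_rep_closed by (simp add: B.nat_pow_pow)
    also have "\<dots> = \<one>\<^bsub>BijGroup {0..<4 * int n}\<^esub>"
      by (simp add: y_sq aff_map_translation_pow m aff_map_eq_one one_mod)
    finally show "aff_rep n Gy [^]\<^bsub>BijGroup {0..<4 * int n}\<^esub> (4::nat) = \<one>\<^bsub>BijGroup {0..<4 * int n}\<^esub>" .
    show "aff_rep n Gz [^]\<^bsub>BijGroup {0..<4 * int n}\<^esub> (4 * n) = \<one>\<^bsub>BijGroup {0..<4 * int n}\<^esub>"
      by (simp add: z_pow aff_map_eq_one one_mod)
    have "aff_rep n Gx \<otimes>\<^bsub>BijGroup {0..<4 * int n}\<^esub> aff_rep n Gy \<otimes>\<^bsub>BijGroup {0..<4 * int n}\<^esub> aff_rep n Gz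
        = aff_map (4 * int n) ((2 * int n - 1) * (2 * int n - 1))
            ((2 * int n - 1) * (2 * int n - 1) + ((2 * int n - 1) + 2 * int n))"
      by (simp add: aff_rep_def mult del: coprime_mult_right_iff)
    also have "\<dots> = \<one>\<^bsub>BijGroup {0..<4 * int n}\<^esub>"
    proof (rule aff_map_eq_one)
      have "(2 * int n - 1) * (2 * int n - 1) + ((2 * int n - 1) + 2 * int n) = int n * (4 * int n)"
        by (simp add: algebra_simps)
      then show "((2 * int n - 1) * (2 * int n - 1) + ((2 * int n - 1) + 2 * int n)) mod (4 * int n) = 0"
        by simp
    qed (rule aff_rep_slope_square_mod)
    finally show "aff_rep n Gx \<otimes>\<^bsub>BijGroup {0..<4 * int n}\<^esub> aff_rep n Gy \<otimes>\<^bsub>BijGroup {0..<4 * int n}\<^esub> aff_rep n Gz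
        = \<one>\<^bsub>BijGroup {0..<4 * int n}\<^esub>" .
    show "aff_rep n Gy [^]\<^bsub>BijGroup {0..<4 * int n}\<^esub> (2::nat) \<otimes>\<^bsub>BijGroup {0..<4 * int n}\<^esub>
        aff_rep n Gz [^]\<^bsub>BijGroup {0..<4 * int n}\<^esub> (2 * n) = \<one>\<^bsub>BijGroup {0..<4 * int n}\<^esub>"
      by (simp add: y_sq z_pow mult aff_map_eq_one one_mod del: coprime_mult_right_iff)
  qed
qed

lemma aff_rep_normal_form:
  fixes e c :: nat
  assumes "e < 2"
  shows "aff_rep n Gy [^]\<^bsub>BijGroup {0..<4 * int n}\<^esub> e \<otimes>\<^bsub>BijGroup {0..<4 * int n}\<^esub>
      aff_rep n Gz [^]\<^bsub>BijGroup {0..<4 * int n}\<^esub> c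
    = (if e = 0 then aff_map (4 * int n) 1 (int c)
       else aff_map (4 * int n) (2 * int n - 1) ((2 * int n - 1) * int c + 1))"
proof -
  interpret B: group "BijGroup {0..<4 * int n}" by (rule group_BijGroup)
  have m: "4 * int n > 0" using n_pos by simp
  have "e = 0 \<or> e = 1" using assms by auto
  then show ?thesis
    using aff_rep_slope_coprime
    by (auto simp: aff_rep_def aff_map_translation_pow aff_map_mult aff_map_one m
        simp del: coprime_mult_right_iff)
qed

end

lemma aff_rep_normal_form_inj:
  fixes e e' c c' :: nat
  assumes n: "n \<ge> 2" and e: "e < 2" "e' < 2" and c: "c < 4 * n" "c' < 4 * n"
    and eq: "aff_rep n Gy [^]\<^bsub>BijGroup {0..<4 * int n}\<^esub> e \<otimes>\<^bsub>BijGroup {0..<4 * int n}\<^esub>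
        aff_rep n Gz [^]\<^bsub>BijGroup {0..<4 * int n}\<^esub> c
      = aff_rep n Gy [^]\<^bsub>BijGroup {0..<4 * int n}\<^esub> e' \<otimes>\<^bsub>BijGroup {0..<4 * int n}\<^esub>
        aff_rep n Gz [^]\<^bsub>BijGroup {0..<4 * int n}\<^esub> c'"
  shows "e = e' \<and> c = c'"
proof -
  have n_pos: "n > 0" and m: "4 * int n > 1" using n by auto
  have slope: "(2 * int n - 1) mod (4 * int n) = 2 * int n - 1" "1 mod (4 * int n) = 1"
    using n by simp_all
  have c_mod: "int c mod (4 * int n) = int c" "int c' mod (4 * int n) = int c'"
    using c by simp_all
  have eq': "(if e = 0 then aff_map (4 * int n) 1 (int c)
        else aff_map (4 * int n) (2 * int n - 1) ((2 * int n - 1) * int c + 1))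
      = (if e' = 0 then aff_map (4 * int n) 1 (int c')
        else aff_map (4 * int n) (2 * int n - 1) ((2 * int n - 1) * int c' + 1))"
    using eq by (simp only: aff_rep_normal_form[OF n_pos e(1)] aff_rep_normal_form[OF n_pos e(2)])
  consider "e = 0" "e' = 0" | "e = 0" "e' = 1" | "e = 1" "e' = 0" | "e = 1" "e' = 1"
    using e by linarith
  then show ?thesis
  proof cases
    case 1
    with eq' c_mod show ?thesis
      by (simp add: aff_map_eq_iff[OF m])
  next
    case 2
    with eq' n slope show ?thesis
      by (simp add: aff_map_eq_iff[OF m])
  next
    case 3
    with eq' n slope show ?thesis
      by (simp add: aff_map_eq_iff[OF m])
  next
    case 4
    with eq' have "((2 * int n - 1) * int c + 1) mod (4 * int n)
        = ((2 * int n - 1) * int c' + 1) mod (4 * int n)"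
      by (simp add: aff_map_eq_iff[OF m])
    then have "4 * int n dvd (2 * int n - 1) * (int c - int c')"
      by (simp add: mod_eq_dvd_iff algebra_simps)
    then have "4 * int n dvd int c - int c'"
      using aff_rep_slope_coprime[OF n_pos] by (simp add: coprime_dvd_mult_right_iff coprime_commute)
    then have "c = c'"
      using c_mod by (metis mod_eq_dvd_iff of_nat_eq_iff)
    with 4 show ?thesis by simp
  qed
qed

lemma gen4p7_eq: "gen4p7 n = pres_gen (relators_4p7 n)"
  by (simp add: fun_eq_iff gen4p7_def)

lemma group_G4p7: "group (G4p7 n)"
  unfolding G4p7_def by (rule group_presented_group)

lemma gen4p7_closed: "gen4p7 n a \<in> carrier (G4p7 n)"
  by (simp add: G4p7_def gen4p7_eq pres_gen_closed)

lemma relations_4p7_G4p7: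
  assumes "n > 0"
  shows "relations_4p7 (G4p7 n) (gen4p7 n Gx) (gen4p7 n Gy) (gen4p7 n Gz) n"
  unfolding G4p7_def gen4p7_eq
  by (rule group.relations_4p7_iff_relators[OF group_presented_group,
        where f = "pres_gen (relators_4p7 n)", THEN iffD2])
    (simp_all add: assms pres_gen_closed eval_word_relator)

lemma satisfies_relators_4p7:
  assumes "relations_4p7 H (f Gx) (f Gy) (f Gz) n"
  shows "satisfies_relators H (relators_4p7 n) f"
proof -
  interpret relations_4p7 H "f Gx" "f Gy" "f Gz" n by fact
  have "f a \<in> carrier H" for a
    by (cases a) simp_all
  with relations_4p7_iff_relators[of f n] show ?thesis
    using assms n_pos by (simp add: satisfies_relators_def satisfies_relators_axioms_def group_axioms)
qed

lemma carrier_G4p7: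
  assumes "n > 0"
  shows "carrier (G4p7 n) = relations_4p7.normal_forms (G4p7 n) (gen4p7 n Gy) (gen4p7 n Gz) n"
proof -
  interpret relations_4p7 "G4p7 n" "gen4p7 n Gx" "gen4p7 n Gy" "gen4p7 n Gz" n
    using assms by (rule relations_4p7_G4p7)
  show ?thesis
  proof
    show "carrier (G4p7 n) \<subseteq> normal_forms"
    proof
      fix g assume "g \<in> carrier (G4p7 n)"
      then obtain w where "g = eval_word (G4p7 n) (gen4p7 n) w"
        unfolding G4p7_def gen4p7_eq carrier_presented_group_eval by blast
      then show "g \<in> normal_forms"
        by (simp add: eval_word_in_normal_forms)
    qed
    show "normal_forms \<subseteq> carrier (G4p7 n)"
      by (rule normal_forms_subset_carrier)
  qed
qed

lemma G4p7_lift: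
  assumes "relations_4p7 H (f Gx) (f Gy) (f Gz) n"
  shows "group_hom (G4p7 n) H (presented_lift H f)"
    and "presented_lift H f (gen4p7 n a) = f a"
proof -
  interpret satisfies_relators H "relators_4p7 n" f
    using assms by (rule satisfies_relators_4p7)
  show "group_hom (G4p7 n) H (presented_lift H f)"
    unfolding G4p7_def by (rule presented_lift_hom)
  show "presented_lift H f (gen4p7 n a) = f a"
    unfolding gen4p7_eq by (rule presented_lift_pres_gen)
qed

lemma G4p7_normal_form_inj:
  fixes e e' c c' :: nat
  assumes n: "n \<ge> 2" and "e < 2" "e' < 2" "c < 4 * n" "c' < 4 * n"
    and eq: "gen4p7 n Gy [^]\<^bsub>G4p7 n\<^esub> e \<otimes>\<^bsub>G4p7 n\<^esub> gen4p7 n Gz [^]\<^bsub>G4p7 n\<^esub> c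
      = gen4p7 n Gy [^]\<^bsub>G4p7 n\<^esub> e' \<otimes>\<^bsub>G4p7 n\<^esub> gen4p7 n Gz [^]\<^bsub>G4p7 n\<^esub> c'"
  shows "e = e' \<and> c = c'"
proof -
  have n_pos: "n > 0" using n by simp
  note lift = G4p7_lift[OF relations_4p7_aff_rep[OF n_pos]]
  interpret \<phi>: group_hom "G4p7 n" "BijGroup {0..<4 * int n}" "presented_lift (BijGroup {0..<4 * int n}) (aff_rep n)"
    by (rule lift(1))
  have "presented_lift (BijGroup {0..<4 * int n}) (aff_rep n)
      (gen4p7 n Gy [^]\<^bsub>G4p7 n\<^esub> k \<otimes>\<^bsub>G4p7 n\<^esub> gen4p7 n Gz [^]\<^bsub>G4p7 n\<^esub> l)
    = aff_rep n Gy [^]\<^bsub>BijGroup {0..<4 * int n}\<^esub> k \<otimes>\<^bsub>BijGroup {0..<4 * int n}\<^esub>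
      aff_rep n Gz [^]\<^bsub>BijGroup {0..<4 * int n}\<^esub> l" for k l :: nat
    by (simp add: gen4p7_closed \<phi>.hom_nat_pow lift(2))
  with eq show ?thesis
    using assms(2-5) by (metis aff_rep_normal_form_inj[OF n])
qed


lemma order_G4p7:
  assumes "n \<ge> 2"
  shows "order (G4p7 n) = 8 * n"
proof -
  have "inj_on (\<lambda>(e, c). gen4p7 n Gy [^]\<^bsub>G4p7 n\<^esub> e \<otimes>\<^bsub>G4p7 n\<^esub> gen4p7 n Gz [^]\<^bsub>G4p7 n\<^esub> c)
      ({..<2::nat} \<times> {..<4 * n})"
    using G4p7_normal_form_inj[OF assms] by (auto intro!: inj_onI)
  then have "card (carrier (G4p7 n)) = card ({..<2::nat} \<times> {..<4 * n})"
    using assms by (simp add: carrier_G4p7 relations_4p7.normal_forms_def[OF relations_4p7_G4p7] card_image)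
  then show ?thesis
    by (simp add: order_def card_cartesian_product)
qed

lemma ord_gen4p7:
  assumes "n \<ge> 2"
  shows "group.ord (G4p7 n) (gen4p7 n Gx) = 2"
    and "group.ord (G4p7 n) (gen4p7 n Gy) = 4"
    and "group.ord (G4p7 n) (gen4p7 n Gz) = 4 * n"
proof -
  interpret relations_4p7 "G4p7 n" "gen4p7 n Gx" "gen4p7 n Gy" "gen4p7 n Gz" n
    using assms by (intro relations_4p7_G4p7) simp
  have nf_eq_one: "gen4p7 n Gy [^]\<^bsub>G4p7 n\<^esub> e \<otimes>\<^bsub>G4p7 n\<^esub> gen4p7 n Gz [^]\<^bsub>G4p7 n\<^esub> c = \<one>\<^bsub>G4p7 n\<^esub>
      \<longleftrightarrow> e = 0 \<and> c = 0" if "e < 2" "c < 4 * n" for e c :: nat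
    using G4p7_normal_form_inj[OF assms, of e 0 c 0] that assms by auto
  show "ord (gen4p7 n Gx) = 2"
    using ord_eq_two_power[of "gen4p7 n Gx" 0] x_pow nf_eq_one[of 1 1] assms
    by (simp add: x_eq)
  show "ord (gen4p7 n Gy) = 4"
    using ord_eq_two_power[of "gen4p7 n Gy" 1] y_pow nf_eq_one[of 0 "2 * n"] assms
    by (simp add: y_pow_two)
  have "gen4p7 n Gz [^]\<^bsub>G4p7 n\<^esub> j = \<one>\<^bsub>G4p7 n\<^esub> \<longleftrightarrow> 4 * n dvd j" for j :: nat
    using pow_mod_eq[OF _ z_pow, of j] nf_eq_one[of 0 "j mod (4 * n)"] assms
    by (simp add: dvd_eq_mod_eq_0)
  then show "ord (gen4p7 n Gz) = 4 * n"
    by (simp add: ord_unique)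
qed

definition character_Z4 :: "gen \<Rightarrow> int" where
  "character_Z4 a = (case a of Gx \<Rightarrow> 2 | Gy \<Rightarrow> 1 | Gz \<Rightarrow> 1)"

definition character_Z2 :: "gen \<Rightarrow> int" where
  "character_Z2 a = (case a of Gx \<Rightarrow> 1 | Gy \<Rightarrow> 1 | Gz \<Rightarrow> 0)"

lemma relations_4p7_character_Z4:
  assumes "n > 0" "odd n"
  shows "relations_4p7 (integer_mod_group 4)
    (character_Z4 Gx) (character_Z4 Gy) (character_Z4 Gz) n"
proof -
  obtain j where "n = 2 * j + 1" using assms(2) oddE by blast
  then show ?thesis
    using assms(1)
    by (simp add: relations_4p7_def relations_4p7_axioms_def character_Z4_def carrier_integer_mod_group)
qed

lemma relations_4p7_character_Z2:
  assumes "n > 0"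
  shows "relations_4p7 (integer_mod_group 2)
    (character_Z2 Gx) (character_Z2 Gy) (character_Z2 Gz) n"
  using assms
  by (simp add: relations_4p7_def relations_4p7_axioms_def character_Z2_def carrier_integer_mod_group)

lemma character_G4p7:
  assumes "relations_4p7 (integer_mod_group m) (f Gx) (f Gy) (f Gz) n"
  shows "h \<in> carrier (G4p7 n) \<Longrightarrow> presented_lift (integer_mod_group m) f
      (h \<otimes>\<^bsub>G4p7 n\<^esub> gen4p7 n c [^]\<^bsub>G4p7 n\<^esub> (k::int) \<otimes>\<^bsub>G4p7 n\<^esub> inv\<^bsub>G4p7 n\<^esub> h)
      = (k * f c) mod int m"
    and "presented_lift (integer_mod_group m) f
      (gen4p7 n Gx \<otimes>\<^bsub>G4p7 n\<^esub> gen4p7 n Gy [^]\<^bsub>G4p7 n\<^esub> (2::nat))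
      = (f Gx + 2 * f Gy) mod int m"
proof -
  interpret \<chi>: group_hom "G4p7 n" "integer_mod_group m" "presented_lift (integer_mod_group m) f"
    using assms by (rule G4p7_lift(1))
  show "presented_lift (integer_mod_group m) f
      (h \<otimes>\<^bsub>G4p7 n\<^esub> gen4p7 n c [^]\<^bsub>G4p7 n\<^esub> k \<otimes>\<^bsub>G4p7 n\<^esub> inv\<^bsub>G4p7 n\<^esub> h)
      = (k * f c) mod int m" if "h \<in> carrier (G4p7 n)"
  proof -
    have "presented_lift (integer_mod_group m) f
        (h \<otimes>\<^bsub>G4p7 n\<^esub> gen4p7 n c [^]\<^bsub>G4p7 n\<^esub> k \<otimes>\<^bsub>G4p7 n\<^esub> inv\<^bsub>G4p7 n\<^esub> h)
        = presented_lift (integer_mod_group m) f (gen4p7 n c) [^]\<^bsub>integer_mod_group m\<^esub> k"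
      by (rule \<chi>.hom_conj_int_pow_comm) (simp_all add: that gen4p7_closed)
    then show ?thesis
      by (simp add: G4p7_lift(2)[OF assms] int_pow_integer_mod_group)
  qed
  show "presented_lift (integer_mod_group m) f
      (gen4p7 n Gx \<otimes>\<^bsub>G4p7 n\<^esub> gen4p7 n Gy [^]\<^bsub>G4p7 n\<^esub> (2::nat))
      = (f Gx + 2 * f Gy) mod int m"
    by (simp add: gen4p7_closed \<chi>.hom_nat_pow G4p7_lift(2)[OF assms] mod_add_right_eq)
qed

lemma G4p7_not_conj_gen_pow:
  assumes "n > 0" "odd n"
  shows "\<not> (\<exists>h \<in> carrier (G4p7 n). \<exists>s \<in> {gen4p7 n Gx, gen4p7 n Gy, gen4p7 n Gz}. \<exists>k :: int.
    gen4p7 n Gx \<otimes>\<^bsub>G4p7 n\<^esub> gen4p7 n Gy [^]\<^bsub>G4p7 n\<^esub> (2::nat)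
      = h \<otimes>\<^bsub>G4p7 n\<^esub> (s [^]\<^bsub>G4p7 n\<^esub> k) \<otimes>\<^bsub>G4p7 n\<^esub> inv\<^bsub>G4p7 n\<^esub> h)"
proof
  assume "\<exists>h \<in> carrier (G4p7 n). \<exists>s \<in> {gen4p7 n Gx, gen4p7 n Gy, gen4p7 n Gz}. \<exists>k :: int.
    gen4p7 n Gx \<otimes>\<^bsub>G4p7 n\<^esub> gen4p7 n Gy [^]\<^bsub>G4p7 n\<^esub> (2::nat)
      = h \<otimes>\<^bsub>G4p7 n\<^esub> (s [^]\<^bsub>G4p7 n\<^esub> k) \<otimes>\<^bsub>G4p7 n\<^esub> inv\<^bsub>G4p7 n\<^esub> h"
  then obtain h c and k :: int where h: "h \<in> carrier (G4p7 n)"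
    and eq: "gen4p7 n Gx \<otimes>\<^bsub>G4p7 n\<^esub> gen4p7 n Gy [^]\<^bsub>G4p7 n\<^esub> (2::nat)
      = h \<otimes>\<^bsub>G4p7 n\<^esub> (gen4p7 n c [^]\<^bsub>G4p7 n\<^esub> k) \<otimes>\<^bsub>G4p7 n\<^esub> inv\<^bsub>G4p7 n\<^esub> h"
    by blast
  have "(k * character_Z4 c) mod 4 = 0"
    using character_G4p7[OF relations_4p7_character_Z4[OF assms]] h eq
    by (simp add: character_Z4_def)
  moreover have "(k * character_Z2 c) mod 2 = 1"
    using character_G4p7[OF relations_4p7_character_Z2[OF assms(1)]] h eq
    by (simp add: character_Z2_def)
  ultimately show False
    by (cases c) (simp_all add: character_Z4_def character_Z2_def, presburger+)
qed

theorem lemma4p7: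
  fixes n :: nat
  assumes "n \<ge> 3" and "odd n"
  shows "group (G4p7 n)
    \<and> order (G4p7 n) = 8 * n
    \<and> group.ord (G4p7 n) (gen4p7 n Gx) = 2
    \<and> group.ord (G4p7 n) (gen4p7 n Gy) = 4
    \<and> group.ord (G4p7 n) (gen4p7 n Gz) = 4 * n
    \<and> (\<exists>g \<in> carrier (G4p7 n).
          \<not> (\<exists>h \<in> carrier (G4p7 n). \<exists>s \<in> {gen4p7 n Gx, gen4p7 n Gy, gen4p7 n Gz}. \<exists>k :: int.
                g = h \<otimes>\<^bsub>G4p7 n\<^esub> (s [^]\<^bsub>G4p7 n\<^esub> k) \<otimes>\<^bsub>G4p7 n\<^esub> inv\<^bsub>G4p7 n\<^esub> h))"
proof -
  interpret group "G4p7 n" by (rule group_G4p7)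
  have n: "n \<ge> 2" "n > 0" using assms(1) by simp_all
  have "gen4p7 n Gx \<otimes>\<^bsub>G4p7 n\<^esub> gen4p7 n Gy [^]\<^bsub>G4p7 n\<^esub> (2::nat) \<in> carrier (G4p7 n)"
    by (simp add: gen4p7_closed)
  then show ?thesis
    using group_G4p7 order_G4p7[OF n(1)] ord_gen4p7[OF n(1)] G4p7_not_conj_gen_pow[OF n(2) assms(2)]
    by blast
qed

end
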